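(* Let $\approx$ be an equinumerosity on $\mathbb{W}$ and let $A,B\in\mathbb W$ with $A\approx B$. Then for every proper superset $A'\in\mathbb W$ of $A$ there exists a proper superset $B'\in\mathbb W$ of $B$ such that $A'\approx B'$.
   Context: Let $\mathbb N=\{0,1,2,\dots\}$. Let $\mathbb{W}$ be the family of finitary point sets: sets $A\subseteq\bigcup_{k\ge1}\mathbb N^k$ of finite tuples of natural numbers (tuples of different lengths allowed) such that for every $n\in\mathbb N$ there is $h$ with $A\cap\{0,\dots,n\}^k=\emptyset$ for all $k>h$. Cartesian products are identified with concatenations: $A\times B=\{(a_1,\dots,a_k,b_1,\dots,b_h):(a_1,\dots,a_k)\in A,\ (b_1,\dots,b_h)\in B\}$; $\{n\}$ denotes the set whose only element is the 1-tuple $(n)$. $A,B\in\mathbb W$ are multipliable if distinct pairs $(a,b)\in A\times B$ have distinct concatenations. Given an equivalence relation $\approx$ on $\mathbb W$, write $A\succ B$, equivalently $B\prec A$, if there exist $A',B'\in\mathbb W$ with $B'\subsetneq A'$, $A\approx A'$ and $B\approx B'$. An equinumerosity is an equivalence relation $\approx$ on $\mathbb W$ such that for all $A,B\in\mathbb W$: (AP) $A\approx B$ iff $A\setminus B\approx B\setminus A$; (ZP) exactly one of $A\approx B$, $A\succ B$, $A\prec B$ holds; (TP) if $T$ is injective on $A$ and $T(a)$ is a permutation of the coordinates of $a$ for every $a\in A$, then $A\approx T[A]$; (UP) $A\times\{n\}\approx A$ for all $n\in\mathbb N$; (PP) if $A,B$ are multipliable, $A',B'$ are multipliable, $A\approx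 A'$ and $B\approx B'$, then $A\times B\approx A'\times B'$. *)

theory Defs
  imports Main "HOL-Library.Multiset"
begin

text \<open>Finite tuples of naturals are represented as lists of naturals; a point set
  consists of nonempty lists (tuples of length k \<ge> 1).\<close>

definition finitary :: "nat list set \<Rightarrow> bool" where
  "finitary A \<longleftrightarrow> (\<forall>a\<in>A. a \<noteq> []) \<and>
     (\<forall>n::nat. \<exists>h::nat. \<forall>k>h. {a \<in> A. length a = k \<and> set a \<subseteq> {0..n}} = {})"

definition WW :: "nat list set set" where
  "WW = {A. finitary A}"

definition ptimes :: "nat list set \<Rightarrow> nat list set \<Rightarrow> nat list set" where
  "ptimes A B = {a @ b | a b. a \<in> A \<and> b \<in> B}"

definition psing :: "nat \<Rightarrow> nat list set" where
  "psing n = {[n]}"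

definition multipliable :: "nat list set \<Rightarrow> nat list set \<Rightarrow> bool" where
  "multipliable A B \<longleftrightarrow>
     (\<forall>a1\<in>A. \<forall>a2\<in>A. \<forall>b1\<in>B. \<forall>b2\<in>B. a1 @ b1 = a2 @ b2 \<longrightarrow> a1 = a2 \<and> b1 = b2)"

definition bigger :: "(nat list set \<times> nat list set) set \<Rightarrow> nat list set \<Rightarrow> nat list set \<Rightarrow> bool" where
  "bigger E A B \<longleftrightarrow> (\<exists>A'\<in>WW. \<exists>B'\<in>WW. B' \<subset> A' \<and> (A, A') \<in> E \<and> (B, B') \<in> E)"

definition equinumerosity :: "(nat list set \<times> nat list set) set \<Rightarrow> bool" where
  "equinumerosity E \<longleftrightarrow> equiv WW E \<and>
    (\<forall>A\<in>WW. \<forall>B\<in>WW. ((A, B) \<in> E \<longleftrightarrow> (A - B, B - A) \<in> E)) \<and>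
    (\<forall>A\<in>WW. \<forall>B\<in>WW.
       ((A, B) \<in> E \<and> \<not> bigger E A B \<and> \<not> bigger E B A) \<or>
       ((A, B) \<notin> E \<and> bigger E A B \<and> \<not> bigger E B A) \<or>
       ((A, B) \<notin> E \<and> \<not> bigger E A B \<and> bigger E B A)) \<and>
    (\<forall>A\<in>WW. \<forall>T. inj_on T A \<and> (\<forall>a\<in>A. mset (T a) = mset a) \<longrightarrow> (A, T ` A) \<in> E) \<and>
    (\<forall>A\<in>WW. \<forall>n. (ptimes A (psing n), A) \<in> E) \<and>
    (\<forall>A\<in>WW. \<forall>B\<in>WW. \<forall>A'\<in>WW. \<forall>B'\<in>WW.
       multipliable A B \<and> multipliable A' B' \<and> (A, A') \<in> E \<and> (B, B') \<in> E
       \<longrightarrow> (ptimes A B, ptimes A' B') \<in> E)"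

end

theory Submission
  imports Defs
begin

text \<open>Write \<open>C = A' - A\<close>. By AP, adding a set disjoint from both sides preserves
  equinumerosity, so \<open>A' = A \<union> C \<approx> A \<union> C' \<approx> B \<union> C'\<close> for any copy \<open>C' \<approx> C\<close> disjoint
  from \<open>A' \<union> B\<close>; \<open>C'\<close> is nonempty because only the empty set is equinumerous to the
  empty set (ZP).
  Such a copy exists for every finitary \<open>F\<close>: mark each tuple of \<open>C\<close> with a final 1,
  giving \<open>D \<approx> C\<close>, and let \<open>M\<close> consist of all paddings of tuples \<open>d \<in> D\<close> by at most
  \<open>L d\<close> zeros, where \<open>L d\<close> depends only on the largest entry of \<open>d\<close> (so \<open>M\<close> stays
  finitary). Then \<open>M \<times> {0} \<approx> M\<close> (UP), so by AP \<open>M \<times> {0} - M \<approx> M - M \<times> {0} = D \<approx> C\<close>,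
  and \<open>M \<times> {0} - M\<close> contains only the maximal paddings, which avoid \<open>F\<close> once \<open>L d\<close>
  exceeds the lengths of tuples of \<open>F\<close> with entries bounded by those of \<open>d\<close>.\<close>

lemma finitary_altdef:
  "finitary A \<longleftrightarrow>
     (\<forall>a\<in>A. a \<noteq> []) \<and> (\<forall>n. \<exists>h. \<forall>a\<in>A. set a \<subseteq> {0..n} \<longrightarrow> length a \<le> h)"
proof -
  have "(\<forall>k>h. {a \<in> A. length a = k \<and> set a \<subseteq> {0..n}} = {}) \<longleftrightarrow>
        (\<forall>a\<in>A. set a \<subseteq> {0..n} \<longrightarrow> length a \<le> h)" for h n
    by (auto simp: not_le) (use leI in blast)
  then show ?thesis
    unfolding finitary_def by simp
qed

lemma finitary_subset: "finitary A \<Longrightarrow> B \<subseteq> A \<Longrightarrow> finitary B"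
  unfolding finitary_altdef by (meson subsetD)

lemma finitary_Un:
  assumes "finitary A" "finitary B"
  shows "finitary (A \<union> B)"
  unfolding finitary_altdef
proof (intro conjI allI)
  show "\<forall>a\<in>A \<union> B. a \<noteq> []"
    using assms unfolding finitary_altdef by blast
next
  fix n
  obtain hA hB where "\<forall>a\<in>A. set a \<subseteq> {0..n} \<longrightarrow> length a \<le> hA"
    and "\<forall>a\<in>B. set a \<subseteq> {0..n} \<longrightarrow> length a \<le> hB"
    using assms unfolding finitary_altdef by meson
  then show "\<exists>h. \<forall>a\<in>A \<union> B. set a \<subseteq> {0..n} \<longrightarrow> length a \<le> h"
    by (intro exI[of _ "max hA hB"]) fastforce
qed

definition length_bound :: "nat list set \<Rightarrow> nat \<Rightarrow> nat" where
  "length_bound F n = (SOME h. \<forall>a\<in>F. set a \<subseteq> {0..n} \<longrightarrow> length a \<le> h)"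

lemma length_le_length_bound:
  assumes "finitary F" "a \<in> F" "set a \<subseteq> {0..n}"
  shows "length a \<le> length_bound F n"
proof -
  have "\<exists>h. \<forall>a\<in>F. set a \<subseteq> {0..n} \<longrightarrow> length a \<le> h"
    using assms(1) unfolding finitary_altdef by blast
  then have "\<forall>a\<in>F. set a \<subseteq> {0..n} \<longrightarrow> length a \<le> length_bound F n"
    unfolding length_bound_def by (rule someI_ex)
  then show ?thesis using assms(2,3) by blast
qed

definition zero_padding :: "nat list set \<Rightarrow> (nat \<Rightarrow> nat) \<Rightarrow> nat list set" where
  "zero_padding D L = {d @ replicate j 0 | d j. d \<in> D \<and> j \<le> L (Max (set d))}"

lemma finitary_zero_padding:
  assumes "finitary D"
  shows "finitary (zero_padding D L)"
  unfolding finitary_altdef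
proof (intro conjI allI)
  show "\<forall>a\<in>zero_padding D L. a \<noteq> []"
    using assms unfolding finitary_altdef zero_padding_def by auto
next
  fix n
  obtain h where h: "\<forall>d\<in>D. set d \<subseteq> {0..n} \<longrightarrow> length d \<le> h"
    using assms unfolding finitary_altdef by blast
  have "length (d @ replicate j 0) \<le> h + Max (L ` {0..n})"
    if "d \<in> D" "j \<le> L (Max (set d))" "set (d @ replicate j 0) \<subseteq> {0..n}" for d j
  proof -
    have "d \<noteq> []" using assms \<open>d \<in> D\<close> unfolding finitary_altdef by blast
    then have "Max (set d) \<le> n" using that(3) by auto
    then have "j \<le> Max (L ` {0..n})"
      by (intro le_trans[OF that(2)] Max_ge) auto
    moreover have "length d \<le> h" using h that by auto
    ultimately show ?thesis by simp
  qed
  then show "\<exists>h. \<forall>a\<in>zero_padding D L. set a \<subseteq> {0..n} \<longrightarrow> length a \<le> h"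
    unfolding zero_padding_def by blast
qed

lemma ptimes_zero_padding_psing_0:
  "ptimes (zero_padding D L) (psing 0) =
     {d @ replicate j 0 @ [0] | d j. d \<in> D \<and> j \<le> L (Max (set d))}"
  unfolding zero_padding_def ptimes_def psing_def by (auto simp del: replicate_append_same) blast+

lemma zero_padding_Diff_shift:
  assumes "\<forall>d\<in>D. d \<noteq> [] \<and> last d \<noteq> 0"
  shows "zero_padding D L - ptimes (zero_padding D L) (psing 0) = D"
proof
  show "zero_padding D L - ptimes (zero_padding D L) (psing 0) \<subseteq> D"
  proof
    fix x assume x: "x \<in> zero_padding D L - ptimes (zero_padding D L) (psing 0)"
    then obtain d j where "d \<in> D" "j \<le> L (Max (set d))" "x = d @ replicate j 0"
      unfolding zero_padding_def by blast
    moreover have "j = 0"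
    proof (rule ccontr)
      assume "j \<noteq> 0"
      then obtain i where "j = Suc i" using not0_implies_Suc by blast
      with \<open>x = d @ replicate j 0\<close> have "x = d @ replicate i 0 @ [0]"
        by (simp add: replicate_append_same)
      with \<open>d \<in> D\<close> \<open>j \<le> L (Max (set d))\<close> \<open>j = Suc i\<close>
      have "x \<in> ptimes (zero_padding D L) (psing 0)"
        unfolding ptimes_zero_padding_psing_0 by force
      with x show False by blast
    qed
    ultimately show "x \<in> D" by simp
  qed
next
  have "d \<in> zero_padding D L" if "d \<in> D" for d
    using that unfolding zero_padding_def by force
  moreover have "d \<notin> ptimes (zero_padding D L) (psing 0)" if "d \<in> D" for d
    using assms that unfolding ptimes_zero_padding_psing_0
    by (auto simp del: replicate_append_same)
  ultimately show "D \<subseteq> zero_padding D L - ptimes (zero_padding D L) (psing 0)"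
    by blast
qed

lemma shift_Diff_zero_padding:
  "ptimes (zero_padding D L) (psing 0) - zero_padding D L \<subseteq>
     {d @ replicate (L (Max (set d))) 0 @ [0] | d. d \<in> D}"
proof
  fix x assume x: "x \<in> ptimes (zero_padding D L) (psing 0) - zero_padding D L"
  then obtain d j where d: "d \<in> D" "j \<le> L (Max (set d))" "x = d @ replicate j 0 @ [0]"
    unfolding ptimes_zero_padding_psing_0 by blast
  have "j = L (Max (set d))"
  proof (rule ccontr)
    assume "j \<noteq> L (Max (set d))"
    with d(2) have "Suc j \<le> L (Max (set d))" by simp
    moreover have "x = d @ replicate (Suc j) 0" using d(3) by (simp add: replicate_append_same)
    ultimately have "x \<in> zero_padding D L"
      using d(1) unfolding zero_padding_def by blast
    with x show False by blast
  qed
  with d show "x \<in> {d @ replicate (L (Max (set d))) 0 @ [0] | d. d \<in> D}" by blast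
qed

lemma zero_padding_maximal_notin:
  assumes "finitary F" "d \<noteq> []"
  shows "d @ replicate (length_bound F (Max (set d))) 0 @ [0] \<notin> F"
proof
  let ?x = "d @ replicate (length_bound F (Max (set d))) 0 @ [0]"
  assume "?x \<in> F"
  moreover have "set ?x \<subseteq> {0..Max (set d)}" using assms(2) by auto
  ultimately have "length ?x \<le> length_bound F (Max (set d))"
    using length_le_length_bound[OF assms(1)] by blast
  then show False by simp
qed

lemma equinumerosity_equiv: "equinumerosity E \<Longrightarrow> equiv WW E"
  unfolding equinumerosity_def by (elim conjE)

lemma equinumerosity_WW:
  "equinumerosity E \<Longrightarrow> (X, Y) \<in> E \<Longrightarrow> X \<in> WW \<and> Y \<in> WW"
  using equinumerosity_equiv[of E] unfolding equiv_def refl_on_def by blast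

lemma equinumerosity_Diff_iff:
  assumes "equinumerosity E" "A \<in> WW" "B \<in> WW"
  shows "(A, B) \<in> E \<longleftrightarrow> (A - B, B - A) \<in> E"
proof -
  have "\<forall>A\<in>WW. \<forall>B\<in>WW. (A, B) \<in> E \<longleftrightarrow> (A - B, B - A) \<in> E"
    using assms(1) unfolding equinumerosity_def by (elim conjE)
  then show ?thesis using assms(2,3) by blast
qed

lemma equinumerosity_ptimes_psing:
  assumes "equinumerosity E" "A \<in> WW"
  shows "(ptimes A (psing n), A) \<in> E"
proof -
  have "\<forall>A\<in>WW. \<forall>n. (ptimes A (psing n), A) \<in> E"
    using assms(1) unfolding equinumerosity_def by (elim conjE)
  then show ?thesis using assms(2) by blast
qed

lemma equinumerosity_not_bigger:
  assumes "equinumerosity E" "A \<in> WW" "B \<in> WW" "(A, B) \<in> E"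
  shows "\<not> bigger E A B"
proof -
  have "\<forall>A\<in>WW. \<forall>B\<in>WW.
       ((A, B) \<in> E \<and> \<not> bigger E A B \<and> \<not> bigger E B A) \<or>
       ((A, B) \<notin> E \<and> bigger E A B \<and> \<not> bigger E B A) \<or>
       ((A, B) \<notin> E \<and> \<not> bigger E A B \<and> bigger E B A)"
    using assms(1) unfolding equinumerosity_def by (elim conjE)
  then show ?thesis using assms(2-4) by blast
qed

lemma equinumerous_empty:
  assumes E: "equinumerosity E" and XE: "(X, {}) \<in> E"
  shows "X = {}"
proof (rule ccontr)
  assume "X \<noteq> {}"
  have W: "X \<in> WW" "{} \<in> WW" using equinumerosity_WW[OF E XE] by auto
  then have "(X, X) \<in> E" "({}, {}) \<in> E"
    using equinumerosity_equiv[OF E] unfolding equiv_def refl_on_def by auto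
  with W \<open>X \<noteq> {}\<close> have "bigger E X {}" unfolding bigger_def by blast
  then show False using equinumerosity_not_bigger[OF E W XE] by blast
qed

lemma equinumerous_Un_disjoint:
  assumes E: "equinumerosity E" and XY: "(X, Y) \<in> E"
    and Z: "Z \<in> WW" "Z \<inter> (X \<union> Y) = {}"
  shows "(Z \<union> X, Z \<union> Y) \<in> E"
proof -
  have "X \<in> WW" "Y \<in> WW" using equinumerosity_WW[OF E XY] by auto
  then have W: "Z \<union> X \<in> WW" "Z \<union> Y \<in> WW" using Z(1) finitary_Un unfolding WW_def by auto
  have "(Z \<union> X) - (Z \<union> Y) = X - Y" "(Z \<union> Y) - (Z \<union> X) = Y - X" using Z(2) by auto
  with XY show ?thesis
    using equinumerosity_Diff_iff[OF E] W \<open>X \<in> WW\<close> \<open>Y \<in> WW\<close> by metis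
qed

lemma equinumerous_disjoint_copy:
  assumes E: "equinumerosity E" and C: "C \<in> WW" and F: "F \<in> WW"
  shows "\<exists>C'. (C', C) \<in> E \<and> C' \<inter> F = {}"
proof -
  define D where "D = ptimes C (psing 1)"
  have D_eq: "D = (\<lambda>c. c @ [1]) ` C" unfolding D_def ptimes_def psing_def by auto
  have DC: "(D, C) \<in> E" unfolding D_def using equinumerosity_ptimes_psing[OF E C] .
  define M where "M = zero_padding D (length_bound F)"
  define M0 where "M0 = ptimes M (psing 0)"
  have "D \<in> WW" using equinumerosity_WW[OF E DC] by blast
  then have MW: "M \<in> WW" using finitary_zero_padding unfolding M_def WW_def by blast
  have M0M: "(M0, M) \<in> E" unfolding M0_def using equinumerosity_ptimes_psing[OF E MW] .
  then have "M0 \<in> WW" using equinumerosity_WW[OF E] by blast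
  with M0M have "(M0 - M, M - M0) \<in> E" using equinumerosity_Diff_iff[OF E _ MW] by blast
  moreover have "M - M0 = D"
    unfolding M_def M0_def D_eq by (rule zero_padding_Diff_shift) auto
  ultimately have "(M0 - M, C) \<in> E"
    using DC equinumerosity_equiv[OF E] unfolding equiv_def by (metis transD)
  moreover have "(M0 - M) \<inter> F = {}"
  proof -
    have "\<forall>d\<in>D. d \<noteq> []" unfolding D_eq by auto
    moreover have "finitary F" using F unfolding WW_def by blast
    ultimately have "{d @ replicate (length_bound F (Max (set d))) 0 @ [0] | d. d \<in> D} \<inter> F = {}"
      using zero_padding_maximal_notin by blast
    then show ?thesis
      using shift_Diff_zero_padding[of D "length_bound F"] unfolding M_def M0_def by blast
  qed
  ultimately show ?thesis by blast
qed

theorem lemma1p5: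
  assumes "equinumerosity E"
    and "A \<in> WW" and "B \<in> WW" and "(A, B) \<in> E"
    and "A' \<in> WW" and "A \<subset> A'"
  shows "\<exists>B'\<in>WW. B \<subset> B' \<and> (A', B') \<in> E"
proof -
  note E = assms(1)
  define C where "C = A' - A"
  have "C \<in> WW" "A' \<union> B \<in> WW"
    using assms(3,5) finitary_subset finitary_Un unfolding C_def WW_def by auto
  then obtain C' where C'C: "(C', C) \<in> E" and disj: "C' \<inter> (A' \<union> B) = {}"
    using equinumerous_disjoint_copy[OF E] by blast
  have CC': "(C, C') \<in> E"
    using C'C equinumerosity_equiv[OF E] unfolding equiv_def by (metis symD)
  have C'W: "C' \<in> WW" using equinumerosity_WW[OF E C'C] by blast
  have "C' \<noteq> {}" using equinumerous_empty[OF E] CC' assms(6) unfolding C_def by blast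
  have "A \<inter> (C \<union> C') = {}" using disj assms(6) unfolding C_def by blast
  with CC' have "(A \<union> C, A \<union> C') \<in> E"
    using equinumerous_Un_disjoint[OF E _ assms(2)] by blast
  moreover have "A \<union> C = A'" using assms(6) unfolding C_def by blast
  moreover have "(C' \<union> A, C' \<union> B) \<in> E"
    using equinumerous_Un_disjoint[OF E assms(4) C'W] disj assms(6) by blast
  ultimately have "(A', B \<union> C') \<in> E"
    using equinumerosity_equiv[OF E] unfolding equiv_def by (simp add: Un_commute transD)
  moreover have "B \<union> C' \<in> WW" using assms(3) C'W finitary_Un unfolding WW_def by auto
  moreover have "B \<subset> B \<union> C'" using \<open>C' \<noteq> {}\<close> disj by blast
  ultimately show ?thesis by blast
qed

end
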